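(* Let $3\le k\le n/2$ be integers. There exists a pair $(\lambda,i)$ with $\lambda\in\mathcal{P}_{k,n}$ and $i$ an integer with $1\le i\le n-1$ such that $|\lambda|\ge k(n-k)-i$ and $\lambda$ is an $(n-i)$-core partition if and only if $(k,n)\in\{(3,6),(4,8),(3,9)\}$.
   Context: $\mathcal{P}_{k,n}=\{\lambda=(\lambda_1,\dots,\lambda_k)\in\mathbb{Z}^k: n-k\ge\lambda_1\ge\dots\ge\lambda_k\ge0\}$ and $|\lambda|=\sum_i\lambda_i$. The hook length of a cell in the Young diagram of $\lambda$ is the number of cells directly to its right or directly below it, plus one (the cell itself). For a positive integer $j$, $\lambda$ is a $j$-core partition if no cell of $\lambda$ has hook length $j$. *)

theory Defs
  imports Main
begin

definition Pkn :: "nat \<Rightarrow> nat \<Rightarrow> nat list set" where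
  "Pkn k n = {lam. length lam = k \<and> (\<forall>r<k. lam ! r \<le> n - k)
                 \<and> (\<forall>r s. r \<le> s \<and> s < k \<longrightarrow> lam ! s \<le> lam ! r)}"

definition size_part :: "nat list \<Rightarrow> nat" where
  "size_part lam = sum_list lam"

definition cells :: "nat list \<Rightarrow> (nat \<times> nat) set" where
  "cells lam = {(r, c). r < length lam \<and> c < lam ! r}"

definition hook_length :: "nat list \<Rightarrow> nat \<times> nat \<Rightarrow> nat" where
  "hook_length lam rc = (case rc of (r, c) \<Rightarrow>
      card {c'. (r, c') \<in> cells lam \<and> c < c'}
    + card {r'. (r', c) \<in> cells lam \<and> r < r'} + 1)"

definition is_core :: "nat \<Rightarrow> nat list \<Rightarrow> bool" where
  "is_core j lam \<longleftrightarrow> (\<forall>x \<in> cells lam. hook_length lam x \<noteq> j)"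

end

theory Submission
  imports Defs
begin

text \<open>Encode a partition lam with k parts in the k x (n - k) box by its beta-set
  Q = {lam ! r + (k - 1 - r)}, a k-subset of [0, n). A cell of hook length h corresponds to a
  pair x \<in> Q, x - h \<notin> Q, so lam is a j-core exactly when Q is closed under subtracting j
  (on the j-runner abacus all beads are pushed down), and the cells missing from the box
  correspond to the inversions x \<in> Q, y \<notin> Q, x < y < n. The hypothesis thus says that a
  j-closed k-subset of [0, n) has at most n - j inversions. Cut [0, n) into a bottom and a top
  block of length min j (n - j) and a middle block. Already the inversions between different
  blocks exceed n - j unless Q is very sparse, which leaves only k = 4, n = 8 or j \<le> 3; in the
  latter cases one exhibits enough inversions inside the blocks, except for the three
  exceptional pairs (k, n).\<close>

section \<open>Beta-sets\<close>

definition beta :: "nat list \<Rightarrow> nat \<Rightarrow> nat" where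
  "beta lam r = lam ! r + (length lam - 1 - r)"

definition beta_set :: "nat list \<Rightarrow> nat set" where
  "beta_set lam = beta lam ` {..<length lam}"

definition minus_closed :: "nat \<Rightarrow> nat set \<Rightarrow> bool" where
  "minus_closed j Q \<longleftrightarrow> (\<forall>x\<in>Q. j \<le> x \<longrightarrow> x - j \<in> Q)"

definition inversions :: "nat set \<Rightarrow> nat \<Rightarrow> (nat \<times> nat) set" where
  "inversions Q n = {(x, y). x \<in> Q \<and> y < n \<and> y \<notin> Q \<and> x < y}"

lemma Pkn_sorted: "lam \<in> Pkn k n \<Longrightarrow> sorted_wrt (\<ge>) lam"
  by (auto simp: Pkn_def sorted_wrt_iff_nth_less)

lemma beta_strict_antimono:
  assumes "sorted_wrt (\<ge>) lam" "r < s" "s < length lam"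
  shows "beta lam s < beta lam r"
proof -
  have "lam ! s \<le> lam ! r" using assms by (simp add: sorted_wrt_iff_nth_less)
  then show ?thesis using assms(2,3) by (simp add: beta_def)
qed

lemma inj_on_beta:
  assumes "sorted_wrt (\<ge>) lam"
  shows "inj_on (beta lam) {..<length lam}"
  by (rule inj_onI) (metis assms beta_strict_antimono lessThan_iff less_irrefl linorder_neqE_nat)

lemma card_beta_set: "sorted_wrt (\<ge>) lam \<Longrightarrow> card (beta_set lam) = length lam"
  by (simp add: beta_set_def card_image inj_on_beta)

lemma beta_set_subset:
  assumes "\<forall>r<length lam. lam ! r \<le> m"
  shows "beta_set lam \<subseteq> {..<m + length lam}"
  using assms by (fastforce simp: beta_set_def beta_def)

lemma hook_length_column_height:
  assumes r: "r < m" and m: "m \<le> length lam"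
    and long: "\<And>s. s < m \<Longrightarrow> c < lam ! s"
    and short: "\<And>s. m \<le> s \<Longrightarrow> s < length lam \<Longrightarrow> lam ! s \<le> c"
  shows "(r, c) \<in> cells lam" "hook_length lam (r, c) = (lam ! r - Suc c) + (m - Suc r) + 1"
proof -
  have arm: "{c'. (r, c') \<in> cells lam \<and> c < c'} = {Suc c..<lam ! r}"
    using r m by (auto simp: cells_def)
  have leg: "{r'. (r', c) \<in> cells lam \<and> r < r'} = {Suc r..<m}"
    using m long short by (force simp: cells_def not_le)
  show "(r, c) \<in> cells lam" using r m long by (simp add: cells_def)
  show "hook_length lam (r, c) = (lam ! r - Suc c) + (m - Suc r) + 1"
    by (simp add: hook_length_def arm leg)
qed

text \<open>A gap y below the beta number of row r lies opposite a cell of row r with hook length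
  beta lam r - y; its column c is chosen so that the column has exactly as many cells as
  there are beta numbers above y.\<close>
lemma hook_length_beta_gap:
  assumes sorted: "sorted_wrt (\<ge>) lam" and r: "r < length lam"
    and y: "y < beta lam r" "y \<notin> beta_set lam"
  shows "\<exists>c. (r, c) \<in> cells lam \<and> hook_length lam (r, c) = beta lam r - y"
proof -
  let ?k = "length lam"
  define m where "m = (LEAST s. ?k \<le> s \<or> beta lam s < y)"
  have m_le: "m \<le> ?k" unfolding m_def by (rule Least_le) simp
  have above: "y < beta lam s" if "s < m" for s
  proof -
    have "\<not> (?k \<le> s \<or> beta lam s < y)" using that not_less_Least unfolding m_def by blast
    moreover have "beta lam s \<noteq> y" using y(2) that m_le by (auto simp: beta_set_def)
    ultimately show ?thesis by simp
  qed
  have below: "beta lam m < y" if "m < ?k"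
    using LeastI[of "\<lambda>s. ?k \<le> s \<or> beta lam s < y" ?k] that unfolding m_def[symmetric] by auto
  have mono: "lam ! s \<le> lam ! t" if "t \<le> s" "s < ?k" for s t
    using sorted that by (cases "t = s") (auto simp: sorted_wrt_iff_nth_less)
  have rm: "r < m" using y(1) below r mono
    by (metis beta_strict_antimono[OF sorted] less_trans not_less_iff_gr_or_eq)
  define c where "c = y - (?k - m)"
  have "?k - m \<le> y" using below by (cases "m < ?k") (auto simp: beta_def)
  then have y_eq: "y = c + (?k - m)" by (simp add: c_def)
  have long: "c < lam ! s" if "s < m" for s
  proof -
    have "c < lam ! (m - 1)" using above[of "m - 1"] rm y_eq by (simp add: beta_def)
    moreover have "lam ! (m - 1) \<le> lam ! s" using mono[of s "m - 1"] that m_le by simp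
    ultimately show ?thesis by simp
  qed
  have short: "lam ! s \<le> c" if "m \<le> s" "s < ?k" for s
  proof -
    have "lam ! m \<le> c" using below that y_eq by (simp add: beta_def)
    then show ?thesis using mono[OF that] by linarith
  qed
  have "hook_length lam (r, c) = beta lam r - y"
    using hook_length_column_height(2)[OF rm m_le long short] long[OF rm] rm m_le y_eq
    by (simp add: beta_def)
  then show ?thesis using hook_length_column_height(1)[OF rm m_le long short] by blast
qed

lemma minus_closed_beta_set_if_core:
  assumes sorted: "sorted_wrt (\<ge>) lam" and core: "is_core j lam"
  shows "minus_closed j (beta_set lam)"
  unfolding minus_closed_def
proof (intro ballI impI)
  fix x assume x: "x \<in> beta_set lam" "j \<le> x"
  show "x - j \<in> beta_set lam"
  proof (rule ccontr)
    assume gap: "x - j \<notin> beta_set lam"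
    then have "0 < j" using x(1) by (cases j) auto
    obtain r where r: "r < length lam" "x = beta lam r" using x(1) by (auto simp: beta_set_def)
    then obtain c where "(r, c) \<in> cells lam" "hook_length lam (r, c) = j"
      using hook_length_beta_gap[OF sorted r(1), of "x - j"] gap \<open>0 < j\<close> x(2) by auto
    then show False using core by (auto simp: is_core_def)
  qed
qed

lemma beta_set_above:
  assumes sorted: "sorted_wrt (\<ge>) lam" and r: "r < length lam"
  shows "{beta lam r<..} \<inter> beta_set lam = beta lam ` {..<r}"
proof -
  have "beta lam r < beta lam s \<longleftrightarrow> s < r" if "s < length lam" for s
    using beta_strict_antimono[OF sorted] r that by (metis less_asym linorder_neqE_nat)
  then show ?thesis using r by (auto simp: beta_set_def)
qed

lemma card_inversions_beta_set:
  assumes sorted: "sorted_wrt (\<ge>) lam" and bound: "\<forall>r<length lam. lam ! r \<le> m"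
  shows "card (inversions (beta_set lam) (m + length lam)) = length lam * m - sum_list lam"
proof -
  let ?k = "length lam" and ?n = "m + length lam" and ?Q = "beta_set lam"
  define gaps where "gaps r = {beta lam r<..<?n} - ?Q" for r
  have card_gaps: "card (gaps r) = m - lam ! r" if r: "r < ?k" for r
  proof -
    have "{beta lam r<..<?n} \<inter> ?Q = {beta lam r<..} \<inter> ?Q"
      using beta_set_subset[OF bound] by auto
    also have "\<dots> = beta lam ` {..<r}" by (rule beta_set_above[OF sorted r])
    finally have "{beta lam r<..<?n} \<inter> ?Q = beta lam ` {..<r}" .
    moreover have "inj_on (beta lam) {..<r}"
      by (rule inj_on_subset[OF inj_on_beta[OF sorted]]) (use r in auto)
    ultimately have "card ({beta lam r<..<?n} \<inter> ?Q) = r" by (simp add: card_image)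
    then show ?thesis
      using card_Diff_subset_Int[of "{beta lam r<..<?n}" ?Q] bound r
      by (simp add: gaps_def beta_def)
  qed
  have "card (inversions ?Q ?n) = card (\<Union>r<?k. {beta lam r} \<times> gaps r)"
    by (rule arg_cong[where f = card]) (auto simp: inversions_def gaps_def beta_set_def)
  also have "\<dots> = (\<Sum>r<?k. card ({beta lam r} \<times> gaps r))"
    using inj_on_beta[OF sorted]
    by (intro card_UN_disjoint) (auto simp: gaps_def dest: inj_onD)
  also have "\<dots> = (\<Sum>r<?k. card (gaps r))" by (simp add: card_cartesian_product)
  also have "\<dots> = (\<Sum>r<?k. m - lam ! r)" using card_gaps by simp
  also have "\<dots> = ?k * m - (\<Sum>r<?k. lam ! r)"
    using bound by (subst sum_subtractf_nat) (auto simp: mult.commute)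
  also have "(\<Sum>r<?k. lam ! r) = sum_list lam"
    by (simp add: sum_list_sum_nth atLeast0LessThan)
  finally show ?thesis .
qed

lemma beta_set_Pkn:
  assumes lam: "lam \<in> Pkn k n" and "k \<le> n"
  shows "beta_set lam \<subseteq> {..<n}" "card (beta_set lam) = k"
    "card (inversions (beta_set lam) n) = k * (n - k) - size_part lam"
proof -
  have sorted: "sorted_wrt (\<ge>) lam" by (rule Pkn_sorted[OF lam])
  have len: "length lam = k" and bound: "\<forall>r<length lam. lam ! r \<le> n - k"
    using lam by (auto simp: Pkn_def)
  have n_eq: "n - k + length lam = n" using \<open>k \<le> n\<close> len by simp
  show "beta_set lam \<subseteq> {..<n}" using beta_set_subset[OF bound] n_eq by simp
  show "card (beta_set lam) = k" using card_beta_set[OF sorted] len by simp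
  show "card (inversions (beta_set lam) n) = k * (n - k) - size_part lam"
    using card_inversions_beta_set[OF sorted bound] len n_eq by (simp add: size_part_def mult.commute)
qed

section \<open>Sets closed under subtracting j\<close>

lemma minus_closed_diff_mult:
  assumes closed: "minus_closed j Q" and x: "x \<in> Q" and "t * j \<le> x"
  shows "x - t * j \<in> Q"
  using assms(3)
proof (induction t)
  case 0
  then show ?case using x by simp
next
  case (Suc t)
  then have "x - t * j \<in> Q" "j \<le> x - t * j" by simp_all
  then have "x - t * j - j \<in> Q" using closed unfolding minus_closed_def by blast
  then show ?case by (simp add: diff_diff_add add.commute)
qed

lemma minus_closed_mod_eq:
  assumes closed: "minus_closed j Q" and x: "x \<in> Q" and "y \<le> x" "y mod j = x mod j"
  shows "y \<in> Q"
proof -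
  obtain t where "x - y = j * t" using assms(3,4) mod_eq_dvd_iff_nat[of y x j] by auto
  then have "y = x - t * j" "t * j \<le> x" using assms(3) by (simp_all add: mult.commute)
  then show ?thesis using minus_closed_diff_mult[OF closed x] by simp
qed

lemma minus_closed_mod:
  "minus_closed j Q \<Longrightarrow> x \<in> Q \<Longrightarrow> x mod j \<in> Q"
  by (erule minus_closed_mod_eq) simp_all

lemma minus_closed_mod_eq_singleton:
  assumes "minus_closed j Q" "Q \<inter> {..<j} = {e}" "x \<in> Q"
  shows "x mod j = e"
proof -
  have "0 < j" using assms(2) by (cases j) auto
  then have "x mod j \<in> Q \<inter> {..<j}" using minus_closed_mod[OF assms(1,3)] by simp
  then show ?thesis using assms(2) by blast
qed

lemma minus_closed_div_less_card:
  assumes closed: "minus_closed j Q" and "finite Q" "x \<in> Q" "0 < j"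
  shows "x div j < card Q"
proof -
  have le: "t * j \<le> x" if "t \<le> x div j" for t
  proof -
    have "t * j \<le> x div j * j" using that by (rule mult_le_mono1)
    also have "\<dots> \<le> x" by simp
    finally show ?thesis .
  qed
  have "inj_on (\<lambda>t. x - t * j) {..x div j}"
  proof (rule inj_onI)
    fix t t' assume t: "t \<in> {..x div j}" "t' \<in> {..x div j}" and eq: "x - t * j = x - t' * j"
    have "t * j \<le> x" "t' * j \<le> x" using t le by simp_all
    then have "t * j = t' * j" using eq by linarith
    then show "t = t'" using \<open>0 < j\<close> by simp
  qed
  moreover have "(\<lambda>t. x - t * j) ` {..x div j} \<subseteq> Q"
    using minus_closed_diff_mult[OF closed \<open>x \<in> Q\<close>] le by auto
  ultimately have "card {..x div j} \<le> card Q"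
    using card_inj_on_le[OF _ _ \<open>finite Q\<close>] by blast
  then show ?thesis by simp
qed

lemma minus_closed_top_block_gap:
  assumes closed: "minus_closed j Q" and "0 < j" and "finite Q" "card Q < n"
  shows "{n - j..<n} - Q \<noteq> {}"
proof
  assume "{n - j..<n} - Q = {}"
  then have top: "{n - j..<n} \<subseteq> Q" by blast
  have "{..<n} \<subseteq> Q"
  proof
    fix y assume "y \<in> {..<n}"
    define t where "t = (n - 1 - y) div j"
    have "t * j \<le> n - 1 - y"
      by (simp add: t_def)
    moreover have "n - 1 - y < t * j + j"
      using div_mult_mod_eq[of "n - 1 - y" j] mod_less_divisor[OF \<open>0 < j\<close>, of "n - 1 - y"]
      unfolding t_def by linarith
    ultimately have "n - j \<le> y + t * j" "y + t * j < n" using \<open>y \<in> {..<n}\<close> by auto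
    then have "y + t * j \<in> Q" using top by auto
    then show "y \<in> Q" using minus_closed_diff_mult[OF closed, of "y + t * j" t] by simp
  qed
  then have "card {..<n} \<le> card Q" by (rule card_mono[OF \<open>finite Q\<close>])
  then show False using \<open>card Q < n\<close> by simp
qed

lemma inj_on_mod_interval:
  fixes a b j :: nat
  assumes "a \<le> j"
  shows "inj_on (\<lambda>y. y mod j) {b..<b + a}"
proof -
  have "y = z" if "y \<in> {b..<b + a}" "z \<in> {b..<b + a}" "y mod j = z mod j" "y \<le> z" for y z
  proof (rule ccontr)
    assume "y \<noteq> z"
    have "j dvd z - y" using mod_eq_dvd_iff_nat[OF that(4), of j] that(3) by simp
    moreover have "0 < z - y" "z - y < j" using \<open>y \<noteq> z\<close> that(1,2,4) assms by auto
    ultimately show False using dvd_imp_le by fastforce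
  qed
  then show ?thesis by (intro inj_onI) (metis nat_le_linear)
qed

text \<open>Reducing mod j maps the top block of Q injectively into the bottom block.\<close>
lemma minus_closed_card_top_le_bottom:
  assumes closed: "minus_closed j Q" and "a \<le> j" and "a = j \<or> a + j = n"
  shows "card (Q \<inter> {n - a..<n}) \<le> card (Q \<inter> {..<a})"
proof (rule card_inj_on_le)
  show "inj_on (\<lambda>y. y mod j) (Q \<inter> {n - a..<n})"
    using inj_on_mod_interval[OF \<open>a \<le> j\<close>, of "n - a"] by (rule inj_on_subset) auto
  have "y mod j < a" if "n - a \<le> y" "y < n" for y
    using assms(2,3) that by (cases "a = j") (auto simp: le_mod_geq)
  then show "(\<lambda>y. y mod j) ` (Q \<inter> {n - a..<n}) \<subseteq> Q \<inter> {..<a}"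
    using minus_closed_mod[OF closed] by auto
qed simp

section \<open>Counting inversions blockwise\<close>

lemma finite_inversions: "finite (inversions Q n)"
  by (rule finite_subset[of _ "{..<n} \<times> {..<n}"]) (auto simp: inversions_def)

lemma two_le_card_if_distinct_mem:
  "finite S \<Longrightarrow> p \<in> S \<Longrightarrow> q \<in> S \<Longrightarrow> p \<noteq> q \<Longrightarrow> 2 \<le> card S"
  using card_mono[of S "{p, q}"] by auto

definition block_diagonal :: "nat \<Rightarrow> nat \<Rightarrow> nat \<Rightarrow> (nat \<times> nat) set" where
  "block_diagonal a b n = {..<a} \<times> {..<a} \<union> {a..<b} \<times> {a..<b} \<union> {b..<n} \<times> {b..<n}"

lemma block_diagonalI:
  "x \<le> y \<Longrightarrow> y < a \<Longrightarrow> (x, y) \<in> block_diagonal a b n"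
  "a \<le> x \<Longrightarrow> x \<le> y \<Longrightarrow> y < b \<Longrightarrow> (x, y) \<in> block_diagonal a b n"
  "b \<le> x \<Longrightarrow> x \<le> y \<Longrightarrow> y < n \<Longrightarrow> (x, y) \<in> block_diagonal a b n"
  by (auto simp: block_diagonal_def)

text \<open>Inversions between different blocks [0,a), [a,b), [b,n) are counted by products.\<close>
lemma card_inversions_blocks:
  assumes "a \<le> b" "b \<le> n"
  shows "card (Q \<inter> {..<a}) * card ({b..<n} - Q) + card (Q \<inter> {..<a}) * card ({a..<b} - Q)
      + card (Q \<inter> {a..<b}) * card ({b..<n} - Q) + card (inversions Q n \<inter> block_diagonal a b n)
      \<le> card (inversions Q n)"
proof -
  define S1 where "S1 = (Q \<inter> {..<a}) \<times> ({b..<n} - Q)"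
  define S2 where "S2 = (Q \<inter> {..<a}) \<times> ({a..<b} - Q)"
  define S3 where "S3 = (Q \<inter> {a..<b}) \<times> ({b..<n} - Q)"
  define S4 where "S4 = inversions Q n \<inter> block_diagonal a b n"
  have fin: "finite S1" "finite S2" "finite S3" "finite S4"
    using finite_inversions by (auto simp: S1_def S2_def S3_def S4_def)
  have "card S1 + card S2 + card S3 + card S4 = card (S1 \<union> S2 \<union> S3 \<union> S4)"
    using fin assms
    by (simp add: card_Un_disjoint S1_def S2_def S3_def S4_def block_diagonal_def Int_Un_distrib
        disjoint_iff)
  also have "\<dots> \<le> card (inversions Q n)"
    using assms by (intro card_mono finite_inversions)
      (auto simp: S1_def S2_def S3_def S4_def inversions_def)
  finally show ?thesis by (simp add: S1_def S2_def S3_def S4_def card_cartesian_product)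
qed

lemma card_Int_atLeastLessThan_plus_gaps:
  fixes Q :: "nat set"
  shows "card (Q \<inter> {a..<b}) + card ({a..<b} - Q) = b - a"
  using card_Int_Diff[of "{a..<b}" Q] by (simp add: Int_commute)

lemma card_split_three_blocks:
  fixes Q :: "nat set"
  assumes "a \<le> b" "b \<le> n" "Q \<subseteq> {..<n}"
  shows "card Q = card (Q \<inter> {..<a}) + card (Q \<inter> {a..<b}) + card (Q \<inter> {b..<n})"
proof -
  have fin: "finite Q" using assms(3) finite_subset by blast
  have "Q = Q \<inter> {..<a} \<union> Q \<inter> {a..<b} \<union> Q \<inter> {b..<n}" using assms by auto
  then have "card Q = card (Q \<inter> {..<a} \<union> Q \<inter> {a..<b} \<union> Q \<inter> {b..<n})" by simp
  also have "\<dots> = card (Q \<inter> {..<a} \<union> Q \<inter> {a..<b}) + card (Q \<inter> {b..<n})"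
    by (rule card_Un_disjoint) (use fin assms in auto)
  also have "card (Q \<inter> {..<a} \<union> Q \<inter> {a..<b}) = card (Q \<inter> {..<a}) + card (Q \<inter> {a..<b})"
    by (rule card_Un_disjoint) (use fin in auto)
  finally show ?thesis .
qed

text \<open>In the two lemmas below, lo, mid and hi count the elements of Q in the bottom, middle and
  top block, and mid_gaps and hi_gaps the non-elements in the middle and top block.\<close>
lemma block_inequality_large_step:
  fixes lo mid hi mid_gaps hi_gaps a k n :: nat
  assumes "lo \<le> a" "hi + hi_gaps = a" "hi \<le> lo" "k = lo + mid + hi" "n = 2 * a + mid + mid_gaps"
    "1 \<le> a" "3 \<le> k" "2 * k \<le> n" "lo * hi_gaps + lo * mid_gaps + mid * hi_gaps \<le> a"
  shows "k = 4 \<and> n = 8"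
proof -
  consider "lo = 0" | "hi_gaps = 0" | "lo = 1" "1 \<le> hi_gaps" | "hi_gaps = 1" "2 \<le> lo"
    | "2 \<le> lo" "2 \<le> hi_gaps"
    by linarith
  then show ?thesis
  proof cases
    case 1
    then have "hi_gaps = a" "k = mid" using assms by auto
    moreover have "mid * hi_gaps \<ge> 3 * hi_gaps" using assms 1 \<open>k = mid\<close> by simp
    ultimately show ?thesis using assms 1 by linarith
  next
    case 2
    then have "lo = a" using assms by simp
    moreover have "lo * mid_gaps \<ge> lo * 2" using assms 2 \<open>lo = a\<close> by simp
    ultimately show ?thesis using assms 2 by linarith
  next
    case 3
    show ?thesis
    proof (cases "hi_gaps = 1")
      case False
      then have "mid * hi_gaps \<ge> mid * 2" using 3 by simp
      moreover have "lo * hi_gaps = hi_gaps" "lo * mid_gaps = mid_gaps" using 3 by simp_all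
      ultimately show ?thesis using assms 3 by linarith
    qed (use assms 3 in simp)
  next
    case 4
    have "mid_gaps \<ge> 2" using assms 4 by linarith
    then have "lo * mid_gaps \<ge> 2 * 2" using 4 mult_le_mono by blast
    then show ?thesis using assms 4 by simp
  next
    case 5
    then obtain l h where "lo = l + 2" "hi_gaps = h + 2" by (metis le_add_diff_inverse2)
    then have "lo * hi_gaps \<ge> lo + hi_gaps + 1 \<or> (lo = 2 \<and> hi_gaps = 2)"
      by (cases "l = 0 \<and> h = 0") (auto simp: algebra_simps)
    then show ?thesis using assms 5 by auto
  qed
qed

lemma block_inequality_small_step:
  fixes lo mid hi mid_gaps hi_gaps w j k n :: nat
  assumes "lo \<le> j" "hi + hi_gaps = j" "hi \<le> lo" "k = lo + mid + hi" "n = 2 * j + mid + mid_gaps"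
    "3 \<le> k" "2 * k \<le> n" "1 \<le> lo" "1 \<le> hi_gaps"
    "lo * hi_gaps + lo * mid_gaps + mid * hi_gaps + w \<le> j + mid + mid_gaps"
  shows "(k = 4 \<and> n = 8) \<or> (j = 1 \<and> w = 0) \<or> (j = 2 \<and> lo = 1 \<and> hi = 1 \<and> 1 \<le> mid \<and> w \<le> 1)
    \<or> (j = 3 \<and> lo = 1 \<and> hi = 1 \<and> k = 3 \<and> w = 0)"
proof -
  consider "lo = 1" "hi = 0" | "lo = 1" "hi = 1" | "2 \<le> lo" "hi_gaps = 1" | "2 \<le> lo" "2 \<le> hi_gaps"
    using assms by linarith
  then show ?thesis
  proof cases
    case 1
    then have "hi_gaps = j" "2 \<le> mid" using assms by auto
    show ?thesis
    proof (cases "j = 1")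
      case False
      then have "mid * hi_gaps \<ge> mid * 2" using assms \<open>hi_gaps = j\<close> by simp
      moreover have "lo * hi_gaps = hi_gaps" "lo * mid_gaps = mid_gaps" using 1 by simp_all
      ultimately show ?thesis using assms 1 \<open>2 \<le> mid\<close> by linarith
    qed (use assms 1 in simp)
  next
    case 2
    then have "hi_gaps + 1 = j" "1 \<le> mid" using assms by auto
    consider "j = 2" | "j = 3" | "4 \<le> j" using assms 2 by linarith
    then show ?thesis
    proof cases
      case 3
      then have "mid * hi_gaps \<ge> mid * 3" using \<open>hi_gaps + 1 = j\<close> by simp
      moreover have "lo * hi_gaps = hi_gaps" "lo * mid_gaps = mid_gaps" using 2 by simp_all
      ultimately show ?thesis using assms 2 \<open>hi_gaps + 1 = j\<close> \<open>1 \<le> mid\<close> by linarith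
    qed (use assms 2 \<open>hi_gaps + 1 = j\<close> \<open>1 \<le> mid\<close> in auto)
  next
    case 3
    have "2 \<le> mid_gaps" using assms 3 by linarith
    then have "lo * mid_gaps \<ge> 2 * mid_gaps" using 3 by simp
    moreover have "lo * hi_gaps = lo" "mid * hi_gaps = mid" using 3 by simp_all
    ultimately show ?thesis using assms 3 \<open>2 \<le> mid_gaps\<close> by linarith
  next
    case 4
    then have bounds: "lo * mid_gaps \<ge> 2 * mid_gaps" "mid * hi_gaps \<ge> mid * 2" by simp_all
    obtain l h where "lo = l + 2" "hi_gaps = h + 2" using 4 by (metis le_add_diff_inverse2)
    then have "lo * hi_gaps \<ge> lo + hi_gaps + 1 \<or> (lo = 2 \<and> hi_gaps = 2)"
      by (cases "l = 0 \<and> h = 0") (auto simp: algebra_simps)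
    then show ?thesis
    proof
      assume "lo = 2 \<and> hi_gaps = 2"
      then show ?thesis using assms bounds by auto
    qed (use assms bounds in linarith)
  qed
qed

section \<open>Moduli one, two and three\<close>

lemma minus_closed_one_inversion:
  assumes closed: "minus_closed 1 Q" and Qn: "Q \<subseteq> {..<n}"
    and card: "card Q = k" "3 \<le> k" "2 * k \<le> n"
  shows "(1, n - 2) \<in> inversions Q n \<inter> block_diagonal 1 (n - 1) n"
proof -
  have down: "y \<in> Q" if "x \<in> Q" "y \<le> x" for x y
    using minus_closed_mod_eq[OF closed that] by simp
  have finQ: "finite Q" using Qn finite_subset by blast
  have "\<not> Q \<subseteq> {0}" using card card_mono[of "{0}" Q] by auto
  then obtain x where "x \<in> Q" "x \<noteq> 0" by blast
  then have "1 \<in> Q" using down[of x 1] by simp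
  have "n - 2 \<notin> Q" using minus_closed_div_less_card[OF closed finQ, of "n - 2"] card by auto
  then show ?thesis using \<open>1 \<in> Q\<close> card by (auto simp: inversions_def block_diagonal_def)
qed

lemma inversion_Suc_if_one_parity:
  assumes "\<And>x. x \<in> Q \<Longrightarrow> x mod 2 = e" "x \<in> Q" "Suc x < n"
  shows "(x, Suc x) \<in> inversions Q n"
proof -
  have "Suc x mod 2 \<noteq> x mod 2" by presburger
  then have "Suc x \<notin> Q" using assms(1)[OF assms(2)] assms(1)[of "Suc x"] by auto
  then show ?thesis using assms(2,3) by (simp add: inversions_def)
qed

lemma even_minus_closed_two_inversions:
  assumes closed: "minus_closed 2 Q" and bottom: "Q \<inter> {..<2} = {0}"
    and mid: "Q \<inter> {2..<n - 2} \<noteq> {}" and "6 \<le> n"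
  shows "2 \<le> card (inversions Q n \<inter> block_diagonal 2 (n - 2) n)"
proof -
  have parity: "x mod 2 = 0" if "x \<in> Q" for x
    by (rule minus_closed_mod_eq_singleton[OF closed bottom that])
  obtain x where x: "x \<in> Q" "2 \<le> x" using mid by auto
  have "0 \<in> Q" "2 \<in> Q"
    using minus_closed_mod_eq[OF closed x(1), of 0] minus_closed_mod_eq[OF closed x(1), of 2]
      x parity[OF x(1)] by simp_all
  moreover have "(0, 1) \<in> block_diagonal 2 (n - 2) n" by (rule block_diagonalI(1)) simp_all
  moreover have "(2, 3) \<in> block_diagonal 2 (n - 2) n"
    using \<open>6 \<le> n\<close> by (intro block_diagonalI(2)) simp_all
  ultimately have "(0, 1) \<in> inversions Q n \<inter> block_diagonal 2 (n - 2) n"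
    "(2, 3) \<in> inversions Q n \<inter> block_diagonal 2 (n - 2) n"
    using inversion_Suc_if_one_parity[OF parity, where x = 0 and n = n]
      inversion_Suc_if_one_parity[OF parity, where x = 2 and n = n] \<open>6 \<le> n\<close> by simp_all
  moreover have "finite (inversions Q n \<inter> block_diagonal 2 (n - 2) n)"
    using finite_inversions by blast
  ultimately show ?thesis by (intro two_le_card_if_distinct_mem[of _ "(0, 1)" "(2, 3)"]) simp_all
qed

lemma odd_minus_closed_two_inversions:
  assumes closed: "minus_closed 2 Q" and Qn: "Q \<subseteq> {..<n}"
    and card: "card Q = k" "3 \<le> k" "2 * k \<le> n" and bottom: "Q \<inter> {..<2} = {1}" and top: "Q \<inter> {n - 2..<n} \<noteq> {}" and "6 \<le> n"
  shows "(k, n) \<in> {(3, 6), (4, 8)} \<or> 2 \<le> card (inversions Q n \<inter> block_diagonal 2 (n - 2) n)"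
proof -
  let ?W = "inversions Q n \<inter> block_diagonal 2 (n - 2) n"
  have finW: "finite ?W" using finite_inversions by blast
  have parity: "x mod 2 = 1" if "x \<in> Q" for x
    by (rule minus_closed_mod_eq_singleton[OF closed bottom that])
  have step: "(x, Suc x) \<in> inversions Q n" if "x \<in> Q" "Suc x < n" for x
    by (rule inversion_Suc_if_one_parity[OF parity that])
  obtain y where y: "y \<in> Q" "n - 2 \<le> y" "y < n" using top by auto
  have below_y: "z \<in> Q" if "z \<le> y" "z mod 2 = 1" for z
    using minus_closed_mod_eq[OF closed y(1) that(1)] parity[OF y(1)] that(2) by simp
  show ?thesis
  proof (cases "even n")
    case False
    then have "y = n - 2" "7 \<le> n" using y parity[OF y(1)] \<open>6 \<le> n\<close> by presburger+
    have "(3, 4) \<in> ?W"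
      using step[of 3] below_y[of 3] \<open>y = n - 2\<close> \<open>7 \<le> n\<close> by (simp add: block_diagonalI(2))
    moreover have "(n - 2, n - 1) \<in> ?W"
      using step[of "n - 2"] y(1) \<open>y = n - 2\<close> \<open>7 \<le> n\<close>
      by (simp add: block_diagonalI(3) Suc_diff_Suc numeral_2_eq_2)
    moreover have "(3, 4) \<noteq> (n - 2, n - 1)" using \<open>7 \<le> n\<close> by simp
    ultimately have "2 \<le> card ?W" by (rule two_le_card_if_distinct_mem[OF finW])
    then show ?thesis ..
  next
    case True
    then have "y = n - 1" using y parity[OF y(1)] by presburger
    have "n = 6 \<or> n = 8 \<or> 10 \<le> n" using True \<open>6 \<le> n\<close> by presburger
    then consider "n = 6" | "n = 8" | "10 \<le> n" by blast
    then show ?thesis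
    proof cases
      case 2
      have "y div 2 < k"
        using minus_closed_div_less_card[OF closed finite_subset[OF Qn finite_lessThan] y(1)] card
        by simp
      then show ?thesis using 2 \<open>y = n - 1\<close> card by simp
    next
      case 3
      have "(3, 4) \<in> ?W" "(5, 6) \<in> ?W"
        using step[of 3] step[of 5] below_y[of 3] below_y[of 5] \<open>y = n - 1\<close> 3
        by (simp_all add: block_diagonalI(2))
      then have "2 \<le> card ?W" by (rule two_le_card_if_distinct_mem[OF finW]) simp
      then show ?thesis ..
    qed (use card in simp)
  qed
qed

lemma minus_closed_two_inversions:
  assumes closed: "minus_closed 2 Q" and Qn: "Q \<subseteq> {..<n}"
    and card: "card Q = k" "3 \<le> k" "2 * k \<le> n"
    and lo: "card (Q \<inter> {..<2}) = 1" and hi: "Q \<inter> {n - 2..<n} \<noteq> {}"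
    and mid: "Q \<inter> {2..<n - 2} \<noteq> {}"
  shows "(k, n) \<in> {(3, 6), (4, 8)} \<or> 2 \<le> card (inversions Q n \<inter> block_diagonal 2 (n - 2) n)"
proof -
  obtain e where e: "Q \<inter> {..<2} = {e}" using lo card_1_singletonE by blast
  then have "e < 2" by (metis IntD2 insertI1 lessThan_iff)
  have "6 \<le> n" using card by linarith
  consider "e = 0" | "e = 1" using \<open>e < 2\<close> by linarith
  then show ?thesis
  proof cases
    case 1
    then show ?thesis using even_minus_closed_two_inversions[OF closed _ mid \<open>6 \<le> n\<close>] e by simp
  next
    case 2
    then show ?thesis
      using odd_minus_closed_two_inversions[OF closed Qn card _ hi \<open>6 \<le> n\<close>] e by simp
  qed
qed

lemma minus_closed_three_inversion:
  assumes closed: "minus_closed 3 Q" and Qn: "Q \<subseteq> {..<n}" and card: "card Q = 3" and "6 \<le> n"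
    and lo: "card (Q \<inter> {..<3}) = 1" and hi: "card (Q \<inter> {n - 3..<n}) = 1"
  shows "n \<in> {6, 9} \<or> inversions Q n \<inter> block_diagonal 3 (n - 3) n \<noteq> {}"
proof -
  obtain t where t: "Q \<inter> {..<3} = {t}" using lo card_1_singletonE by blast
  obtain y where y: "Q \<inter> {n - 3..<n} = {y}" using hi card_1_singletonE by blast
  have "t \<in> Q" "t < 3" using t by (simp_all add: set_eq_iff) blast+
  have "y \<in> Q" "n - 3 \<le> y" "y < n" using y by (simp_all add: set_eq_iff) blast+
  consider "t < 2" | "y < n - 1" | "t = 2" "y = n - 1" using \<open>t < 3\<close> \<open>y < n\<close> by linarith
  then show ?thesis
  proof cases
    case 1
    have "2 \<notin> Q"
    proof
      assume "2 \<in> Q"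
      then have "2 \<in> Q \<inter> {..<3}" by simp
      then show False using t 1 by simp
    qed
    then have "(t, 2) \<in> inversions Q n \<inter> block_diagonal 3 (n - 3) n"
      using \<open>t \<in> Q\<close> 1 \<open>6 \<le> n\<close> by (simp add: inversions_def block_diagonalI(1))
    then show ?thesis by blast
  next
    case 2
    have "n - 1 \<notin> Q"
    proof
      assume "n - 1 \<in> Q"
      then have "n - 1 \<in> Q \<inter> {n - 3..<n}" using \<open>6 \<le> n\<close> by simp
      then show False using y 2 by simp
    qed
    then have "(y, n - 1) \<in> inversions Q n \<inter> block_diagonal 3 (n - 3) n"
      using \<open>y \<in> Q\<close> \<open>n - 3 \<le> y\<close> 2 by (simp add: inversions_def block_diagonalI(3))
    then show ?thesis by blast
  next
    case 3
    then have top: "n - 1 \<in> Q" using \<open>y \<in> Q\<close> by simp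
    have "(n - 1) mod 3 = 2" using minus_closed_mod_eq_singleton[OF closed t top] 3 by simp
    have "(n - 1) div 3 < 3"
      using minus_closed_div_less_card[OF closed finite_subset[OF Qn finite_lessThan] top] card
      by simp
    then have "n \<le> 9" by (simp add: div_less_iff_less_mult)
    then have "n = 6 \<or> n = 7 \<or> n = 8 \<or> n = 9" using \<open>6 \<le> n\<close> by linarith
    then have "n \<in> {6, 9}" using \<open>(n - 1) mod 3 = 2\<close> by auto
    then show ?thesis ..
  qed
qed

section \<open>The exceptional cases\<close>

lemma few_inversions_large_step:
  assumes Qn: "Q \<subseteq> {..<n}" and card: "card Q = k" "3 \<le> k" "2 * k \<le> n"
    and j: "j < n" "n < 2 * j" and closed: "minus_closed j Q"
    and few: "card (inversions Q n) \<le> n - j"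
  shows "k = 4 \<and> n = 8"
proof (rule block_inequality_large_step)
  let ?a = "n - j"
  show "card (Q \<inter> {..<?a}) \<le> ?a"
    using card_mono[of "{..<?a}" "Q \<inter> {..<?a}"] by simp
  show "card (Q \<inter> {j..<n}) + card ({j..<n} - Q) = ?a"
    by (rule card_Int_atLeastLessThan_plus_gaps)
  show "card (Q \<inter> {j..<n}) \<le> card (Q \<inter> {..<?a})"
    using minus_closed_card_top_le_bottom[OF closed, of ?a n] j by simp
  show "k = card (Q \<inter> {..<?a}) + card (Q \<inter> {?a..<j}) + card (Q \<inter> {j..<n})"
    using card_split_three_blocks[OF _ _ Qn, of ?a j] j card by simp
  show "n = 2 * ?a + card (Q \<inter> {?a..<j}) + card ({?a..<j} - Q)"
    using card_Int_atLeastLessThan_plus_gaps[of Q ?a j] j by simp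
  show "card (Q \<inter> {..<?a}) * card ({j..<n} - Q) + card (Q \<inter> {..<?a}) * card ({?a..<j} - Q)
      + card (Q \<inter> {?a..<j}) * card ({j..<n} - Q) \<le> ?a"
    using card_inversions_blocks[of ?a j n Q] j few by linarith
  show "1 \<le> ?a" using j by simp
qed (use card in simp_all)

lemma few_inversions_small_step_cases:
  assumes Qn: "Q \<subseteq> {..<n}" and card: "card Q = k" "3 \<le> k" "2 * k \<le> n"
    and j: "1 \<le> j" "2 * j \<le> n" and closed: "minus_closed j Q"
    and few: "card (inversions Q n) \<le> n - j"
  shows "(k = 4 \<and> n = 8)
    \<or> (j = 1 \<and> card (inversions Q n \<inter> block_diagonal j (n - j) n) = 0)
    \<or> (j = 2 \<and> card (Q \<inter> {..<j}) = 1 \<and> card (Q \<inter> {n - j..<n}) = 1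
        \<and> 1 \<le> card (Q \<inter> {j..<n - j}) \<and> card (inversions Q n \<inter> block_diagonal j (n - j) n) \<le> 1)
    \<or> (j = 3 \<and> card (Q \<inter> {..<j}) = 1 \<and> card (Q \<inter> {n - j..<n}) = 1
        \<and> k = 3 \<and> card (inversions Q n \<inter> block_diagonal j (n - j) n) = 0)"
proof -
  let ?b = "n - j" and ?mid_gaps = "card ({j..<n - j} - Q)" and ?hi_gaps = "card ({n - j..<n} - Q)"
  define lo where "lo = card (Q \<inter> {..<j})"
  define mid where "mid = card (Q \<inter> {j..<?b})"
  define hi where "hi = card (Q \<inter> {?b..<n})"
  have finQ: "finite Q" using Qn finite_subset by blast
  obtain x where "x \<in> Q" using card by fastforce
  then have "x mod j \<in> Q \<inter> {..<j}" using minus_closed_mod[OF closed] j by simp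
  then have lo_pos: "1 \<le> lo" using finQ by (auto simp: lo_def Suc_le_eq card_gt_0_iff)
  have "{n - j..<n} - Q \<noteq> {}"
    using minus_closed_top_block_gap[OF closed _ finQ, of n] card j by simp
  then have gap: "1 \<le> ?hi_gaps" by (simp add: Suc_le_eq card_gt_0_iff)
  have lo_le: "lo \<le> j" using card_mono[of "{..<j}" "Q \<inter> {..<j}"] by (simp add: lo_def)
  have hi_split: "hi + ?hi_gaps = j"
    using card_Int_atLeastLessThan_plus_gaps[of Q ?b n] j by (simp add: hi_def)
  have hi_le: "hi \<le> lo"
    using minus_closed_card_top_le_bottom[OF closed, of j n] by (simp add: hi_def lo_def)
  have k_split: "k = lo + mid + hi"
    using card_split_three_blocks[OF _ _ Qn, of j ?b] j card by (simp add: lo_def mid_def hi_def)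
  have n_split: "n = 2 * j + mid + ?mid_gaps"
    using card_Int_atLeastLessThan_plus_gaps[of Q j ?b] j by (simp add: mid_def)
  have "lo * ?hi_gaps + lo * ?mid_gaps + mid * ?hi_gaps
      + card (inversions Q n \<inter> block_diagonal j ?b n) \<le> j + mid + ?mid_gaps"
    using card_inversions_blocks[of j ?b n Q] few j n_split
    unfolding lo_def mid_def by linarith
  from block_inequality_small_step[OF lo_le hi_split hi_le k_split n_split card(2,3) lo_pos gap this]
  show ?thesis by (simp add: lo_def mid_def hi_def)
qed

lemma few_inversions_small_step:
  assumes Qn: "Q \<subseteq> {..<n}" and card: "card Q = k" "3 \<le> k" "2 * k \<le> n"
    and j: "1 \<le> j" "2 * j \<le> n" and closed: "minus_closed j Q"
    and few: "card (inversions Q n) \<le> n - j"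
  shows "(k, n) \<in> {(3, 6), (4, 8), (3, 9)}"
  using few_inversions_small_step_cases[OF assms]
proof (elim disjE conjE)
  let ?W = "inversions Q n \<inter> block_diagonal j (n - j) n"
  have finW: "finite ?W" using finite_inversions by blast
  {
    assume "j = 1" "card ?W = 0"
    then show ?thesis using minus_closed_one_inversion[OF _ Qn card] closed finW by auto
  next
    assume "j = 2" "card (Q \<inter> {..<j}) = 1" "card (Q \<inter> {n - j..<n}) = 1"
      "1 \<le> card (Q \<inter> {j..<n - j})" "card ?W \<le> 1"
    then show ?thesis using minus_closed_two_inversions[OF _ Qn card] closed by fastforce
  next
    assume "j = 3" "card (Q \<inter> {..<j}) = 1" "card (Q \<inter> {n - j..<n}) = 1" "k = 3" "card ?W = 0"
    then show ?thesis using minus_closed_three_inversion[OF _ Qn] closed card j finW by fastforce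
  }
qed simp

lemma few_inversions_minus_closed:
  assumes Qn: "Q \<subseteq> {..<n}" and card: "card Q = k" "3 \<le> k" "2 * k \<le> n"
    and j: "1 \<le> j" "j < n" and closed: "minus_closed j Q"
    and few: "card (inversions Q n) \<le> n - j"
  shows "(k, n) \<in> {(3, 6), (4, 8), (3, 9)}"
proof (cases "2 * j \<le> n")
  case True
  show ?thesis by (rule few_inversions_small_step[OF Qn card j(1) True closed few])
next
  case False
  then show ?thesis using few_inversions_large_step[OF Qn card j(2) _ closed few] by simp
qed

lemma hook_length_eq:
  assumes "r < length lam" "c < lam ! r"
  shows "hook_length lam (r, c)
    = (lam ! r - Suc c) + length (filter (\<lambda>r'. c < lam ! r') [Suc r..<length lam]) + 1"
proof -
  have "{c'. (r, c') \<in> cells lam \<and> c < c'} = {Suc c..<lam ! r}"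
    using assms by (auto simp: cells_def)
  moreover have "{r'. (r', c) \<in> cells lam \<and> r < r'}
      = set (filter (\<lambda>r'. c < lam ! r') [Suc r..<length lam])"
    by (auto simp: cells_def)
  moreover have "card (set (filter (\<lambda>r'. c < lam ! r') [Suc r..<length lam]))
      = length (filter (\<lambda>r'. c < lam ! r') [Suc r..<length lam])"
    by (rule distinct_card) simp
  ultimately show ?thesis by (simp add: hook_length_def)
qed

lemma is_core_iff_nth:
  "is_core j lam \<longleftrightarrow> (\<forall>r < length lam. \<forall>c < lam ! r.
     (lam ! r - Suc c) + length (filter (\<lambda>r'. c < lam ! r') [Suc r..<length lam]) + 1 \<noteq> j)"
  unfolding is_core_def by (auto simp: cells_def hook_length_eq)

lemma exceptional_cores:
  "is_core 2 [3, 2, 1]" "is_core 4 [4, 4, 2, 2]" "is_core 3 [6, 4, 2]"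
  unfolding is_core_iff_nth by (simp_all add: All_less_Suc numeral_eq_Suc upt_rec)

lemma exceptional_Pkn:
  "[3, 2, 1] \<in> Pkn 3 6" "[4, 4, 2, 2] \<in> Pkn 4 8" "[6, 4, 2] \<in> Pkn 3 9"
  unfolding Pkn_def by (auto simp: All_less_Suc numeral_eq_Suc nth_Cons split: nat.splits)

lemma exceptional_witness:
  assumes "(k, n) \<in> {(3, 6), (4, 8), (3, 9)}"
  shows "\<exists>lam i. lam \<in> Pkn k n \<and> 1 \<le> i \<and> i \<le> n - 1
    \<and> int (size_part lam) \<ge> int k * (int n - int k) - int i \<and> is_core (n - i) lam"
  using assms
proof (elim insertE)
  assume "(k, n) = (3, 6)"
  then show ?thesis using exceptional_Pkn(1) exceptional_cores(1)
    by (intro exI[of _ "[3, 2, 1]"] exI[of _ 4]) (simp add: size_part_def)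
next
  assume "(k, n) = (4, 8)"
  then show ?thesis using exceptional_Pkn(2) exceptional_cores(2)
    by (intro exI[of _ "[4, 4, 2, 2]"] exI[of _ 4]) (simp add: size_part_def)
next
  assume "(k, n) = (3, 9)"
  then show ?thesis using exceptional_Pkn(3) exceptional_cores(3)
    by (intro exI[of _ "[6, 4, 2]"] exI[of _ 6]) (simp add: size_part_def)
qed simp

theorem lemma3p3:
  fixes k n :: nat
  assumes "3 \<le> k" and "2 * k \<le> n"
  shows "(\<exists>lam i. lam \<in> Pkn k n \<and> 1 \<le> i \<and> i \<le> n - 1
            \<and> int (size_part lam) \<ge> int k * (int n - int k) - int i
            \<and> is_core (n - i) lam)
         \<longleftrightarrow> (k, n) \<in> {(3, 6), (4, 8), (3, 9)}"
proof
  assume "\<exists>lam i. lam \<in> Pkn k n \<and> 1 \<le> i \<and> i \<le> n - 1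
            \<and> int (size_part lam) \<ge> int k * (int n - int k) - int i
            \<and> is_core (n - i) lam"
  then obtain lam i where lam: "lam \<in> Pkn k n" and i: "1 \<le> i" "i \<le> n - 1"
    and size: "int (size_part lam) \<ge> int k * (int n - int k) - int i"
    and core: "is_core (n - i) lam"
    by blast
  have "k \<le> n" using assms by simp
  note Q = beta_set_Pkn[OF lam this]
  have "int (k * (n - k)) \<le> int (size_part lam) + int i"
    using size \<open>k \<le> n\<close> by (simp add: of_nat_diff)
  then have "k * (n - k) - size_part lam \<le> i" by linarith
  then have few: "card (inversions (beta_set lam) n) \<le> n - (n - i)" using Q(3) i by simp
  have closed: "minus_closed (n - i) (beta_set lam)"
    by (rule minus_closed_beta_set_if_core[OF Pkn_sorted[OF lam] core])
  show "(k, n) \<in> {(3, 6), (4, 8), (3, 9)}"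
    by (rule few_inversions_minus_closed[OF Q(1,2) assms _ _ closed few]) (use i assms in auto)
qed (rule exceptional_witness)

end
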